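(* (i) Let $(A,\succ,\prec)$ be an anti-pre-Novikov algebra and $s\in A\otimes A$ define a factorizable anti-pre-Novikov bialgebra $(A,\succ,\prec,\Delta_{\succ,s},\Delta_{\prec,s})$, and let $\lambda\in k$ be nonzero. Define $\omega(x,y)=-\lambda\langle T_{s+\tau(s)}^{-1}(x),y\rangle$ for $x,y\in A$ and $P=T_s\omega^\sharp$. Then $(A,\succ,\prec,P,\omega)$ is a quadratic Rota–Baxter anti-pre-Novikov algebra of weight $\lambda$. (ii) Conversely, let $(A,\succ,\prec,P,\omega)$ be a quadratic Rota–Baxter anti-pre-Novikov algebra of weight $\lambda\neq0$, and let $s\in A\otimes A$ be defined by $T_s=P(\omega^\sharp)^{-1}$. Then $(A,\succ,\prec,\Delta_{\succ,s},\Delta_{\prec,s})$ is a factorizable anti-pre-Novikov bialgebra.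
   Context: $A$ is finite-dimensional over a field $k$. An anti-pre-Novikov algebra is $(A,\succ,\prec)$ such that with $x\circ y=x\succ y+x\prec y$: $(x\circ y-y\circ x)\succ z=y\succ(x\succ z)-x\succ(y\succ z)$; $x\prec(y\circ z)=(y\succ x)\prec z-(x\prec y)\prec z-y\succ(x\prec z)$; $(x\circ y)\succ z=-(x\succ z)\prec y$; $(x\prec y)\prec z=(x\prec z)\prec y$; $(x\circ y-y\circ x)\prec z=x\succ(y\circ z)-y\succ(x\circ z)$. Notation: $x\odot y=x\succ y+y\prec x$; $L_\ast(x)y=x\ast y$, $R_\ast(x)y=y\ast x$; $L_{\star}=L_{\circ}+R_{\circ}$, $L_{\odot}=L_{\succ}+R_{\prec}$; $\tau$ is the flip; $T_r:A^*\to A$, $\langle T_r(\zeta),\eta\rangle=\langle r,\zeta\otimes\eta\rangle$; $\omega^\sharp:A\to A^*$, $\langle\omega^\sharp(x),y\rangle=\omega(x,y)$. $r\in A\otimes A$ is invariant if $(I\otimes L_{\star}(x)-L_{\succ}(x)\otimes I)r=0$ and $(L_{\circ}(x)\otimes I-I\otimes L_{\odot}(x))r=0$ for all $x$. For $s=\sum_i a_i\otimes b_i$, the anti-pre-Novikov Yang–Baxter equation (APN-YBE) is $\sum_{i,j}a_i\circ a_j\otimes b_i\otimes b_j+\sum_{i,j}a_j\otimes a_i\otimes(b_i\odot b_j)+\sum_{i,j}a_i\otimes(b_i\prec a_j)\otimes b_j=0$. Given $s$, set $\Delta_{\succ,s}(x)=(I\otimes L_{\star}(x)-L_{\succ}(x)\otimes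 I)s$ and $\Delta_{\prec,s}(x)=(L_{\circ}(x)\otimes I-I\otimes L_{\odot}(x))s$. If $s$ solves the APN-YBE and $s+\tau(s)$ is invariant, $(A,\succ,\prec,\Delta_{\succ,s},\Delta_{\prec,s})$ is called a quasi-triangular anti-pre-Novikov bialgebra (the paper shows it is always an anti-pre-Novikov bialgebra); it is called factorizable if in addition $T_{s+\tau(s)}:A^*\to A$ is a linear isomorphism. A Rota–Baxter operator of weight $\lambda$ on $(A,\succ,\prec)$ is a linear $P$ with $P(x)\prec P(y)=P(P(x)\prec y+x\prec P(y)+\lambda x\prec y)$ and $P(x)\succ P(y)=P(P(x)\succ y+x\succ P(y)+\lambda x\succ y)$. A quadratic Rota–Baxter anti-pre-Novikov algebra of weight $\lambda$ is $(A,\succ,\prec,P,\omega)$ with $P$ Rota–Baxter of weight $\lambda$, $\omega$ non-degenerate symmetric with $\omega(x\prec y,z)=-\omega(x,z\circ y)$, $\omega(x\succ y,z)=\omega(x\circ z+z\circ x,y)$, and $\omega(P(x),y)+\omega(x,P(y))+\lambda\omega(x,y)=0$. *)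

theory Defs
  imports Main
begin

text \<open>A finite-dimensional vector space A over a field 'k is represented, after choosing a
basis indexed by the finite type 'n, as the coordinate space 'n \<Rightarrow> 'k.  The dual A* is
represented by coordinates w.r.t. the dual basis (also 'n \<Rightarrow> 'k), A \<otimes> A by
coefficient matrices 'n \<Rightarrow> 'n \<Rightarrow> 'k, and A \<otimes> A \<otimes> A by 'n \<Rightarrow> 'n \<Rightarrow> 'n \<Rightarrow> 'k.\<close>

type_synonym ('n, 'k) vec = "'n \<Rightarrow> 'k"
type_synonym ('n, 'k) bop = "('n,'k) vec \<Rightarrow> ('n,'k) vec \<Rightarrow> ('n,'k) vec"

definition vadd :: "('n,'k::field) vec \<Rightarrow> ('n,'k) vec \<Rightarrow> ('n,'k) vec" where
  "vadd x y = (\<lambda>i. x i + y i)"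
definition vsub :: "('n,'k::field) vec \<Rightarrow> ('n,'k) vec \<Rightarrow> ('n,'k) vec" where
  "vsub x y = (\<lambda>i. x i - y i)"
definition vsmul :: "'k::field \<Rightarrow> ('n,'k) vec \<Rightarrow> ('n,'k) vec" where
  "vsmul c x = (\<lambda>i. c * x i)"
definition vzero :: "('n,'k::field) vec" where
  "vzero = (\<lambda>i. 0)"
definition basis :: "'n \<Rightarrow> ('n,'k::field) vec" where
  "basis i = (\<lambda>j. if j = i then 1 else 0)"

definition is_linear :: "(('n,'k::field) vec \<Rightarrow> ('m,'k) vec) \<Rightarrow> bool" where
  "is_linear f \<longleftrightarrow> (\<forall>x y. f (vadd x y) = vadd (f x) (f y)) \<and> (\<forall>c x. f (vsmul c x) = vsmul c (f x))"

definition bilinear_op :: "('n,'k::field) bop \<Rightarrow> bool" where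
  "bilinear_op m \<longleftrightarrow> (\<forall>y. is_linear (\<lambda>x. m x y)) \<and> (\<forall>x. is_linear (m x))"

definition bilinear_form :: "(('n,'k::field) vec \<Rightarrow> ('n,'k) vec \<Rightarrow> 'k) \<Rightarrow> bool" where
  "bilinear_form w \<longleftrightarrow>
     (\<forall>x y z. w (vadd x y) z = w x z + w y z) \<and> (\<forall>c x z. w (vsmul c x) z = c * w x z) \<and>
     (\<forall>x y z. w z (vadd x y) = w z x + w z y) \<and> (\<forall>c x z. w z (vsmul c x) = c * w z x)"

text \<open>x \<circ> y = x \<succ> y + x \<prec> y ;  here sc = \<succ>, pc = \<prec>\<close>
definition circ :: "('n,'k::field) bop \<Rightarrow> ('n,'k) bop \<Rightarrow> ('n,'k) bop" where
  "circ sc pc x y = vadd (sc x y) (pc x y)"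

definition anti_pre_Novikov :: "('n,'k::field) bop \<Rightarrow> ('n,'k) bop \<Rightarrow> bool" where
  "anti_pre_Novikov sc pc \<longleftrightarrow> bilinear_op sc \<and> bilinear_op pc \<and>
    (\<forall>x y z.
      sc (vsub (circ sc pc x y) (circ sc pc y x)) z = vsub (sc y (sc x z)) (sc x (sc y z)) \<and>
      pc x (circ sc pc y z) = vsub (vsub (pc (sc y x) z) (pc (pc x y) z)) (sc y (pc x z)) \<and>
      sc (circ sc pc x y) z = vsmul (-1) (pc (sc x z) y) \<and>
      pc (pc x y) z = pc (pc x z) y \<and>
      pc (vsub (circ sc pc x y) (circ sc pc y x)) z = vsub (sc x (circ sc pc y z)) (sc y (circ sc pc x z)))"

type_synonym ('n,'k) ten2 = "'n \<Rightarrow> 'n \<Rightarrow> 'k"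
type_synonym ('n,'k) ten3 = "'n \<Rightarrow> 'n \<Rightarrow> 'n \<Rightarrow> 'k"

definition tmap :: "(('n::finite,'k::field) vec \<Rightarrow> ('n,'k) vec) \<Rightarrow> (('n,'k) vec \<Rightarrow> ('n,'k) vec)
    \<Rightarrow> ('n,'k) ten2 \<Rightarrow> ('n,'k) ten2" where
  "tmap f g r = (\<lambda>a b. \<Sum>i\<in>UNIV. \<Sum>j\<in>UNIV. r i j * f (basis i) a * g (basis j) b)"

definition flip :: "('n,'k) ten2 \<Rightarrow> ('n,'k) ten2" where
  "flip r = (\<lambda>a b. r b a)"

definition tadd :: "('n,'k::field) ten2 \<Rightarrow> ('n,'k) ten2 \<Rightarrow> ('n,'k) ten2" where
  "tadd r t = (\<lambda>a b. r a b + t a b)"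

definition Lstar :: "('n,'k::field) bop \<Rightarrow> ('n,'k) bop \<Rightarrow> ('n,'k) vec \<Rightarrow> ('n,'k) vec \<Rightarrow> ('n,'k) vec" where
  "Lstar sc pc x y = vadd (circ sc pc x y) (circ sc pc y x)"

definition odot :: "('n,'k::field) bop \<Rightarrow> ('n,'k) bop \<Rightarrow> ('n,'k) bop" where
  "odot sc pc x y = vadd (sc x y) (pc y x)"

definition invariant :: "('n::finite,'k::field) bop \<Rightarrow> ('n,'k) bop \<Rightarrow> ('n,'k) ten2 \<Rightarrow> bool" where
  "invariant sc pc r \<longleftrightarrow> (\<forall>x.
     tmap id (Lstar sc pc x) r = tmap (sc x) id r \<and>
     tmap (circ sc pc x) id r = tmap id (odot sc pc x) r)"

definition APN_YBE :: "('n::finite,'k::field) bop \<Rightarrow> ('n,'k) bop \<Rightarrow> ('n,'k) ten2 \<Rightarrow> bool" where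
  "APN_YBE sc pc s \<longleftrightarrow> (\<forall>a b c.
     (\<Sum>i\<in>UNIV. \<Sum>j\<in>UNIV. \<Sum>k\<in>UNIV. \<Sum>l\<in>UNIV. s i j * s k l *
        (circ sc pc (basis i) (basis k) a * basis j b * basis l c
         + basis k a * basis i b * odot sc pc (basis j) (basis l) c
         + basis i a * pc (basis j) (basis k) b * basis l c)) = 0)"

text \<open>pairing of A* with A, and T_r : A* \<rightarrow> A with <T_r(z), e> = <r, z \<otimes> e>\<close>
definition pairing :: "('n::finite,'k::field) vec \<Rightarrow> ('n,'k) vec \<Rightarrow> 'k" where
  "pairing z x = (\<Sum>i\<in>UNIV. z i * x i)"

definition Tmap :: "('n::finite,'k::field) ten2 \<Rightarrow> ('n,'k) vec \<Rightarrow> ('n,'k) vec" where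
  "Tmap r z = (\<lambda>j. \<Sum>i\<in>UNIV. r i j * z i)"

definition sharp :: "(('n::finite,'k::field) vec \<Rightarrow> ('n,'k) vec \<Rightarrow> 'k) \<Rightarrow> ('n,'k) vec \<Rightarrow> ('n,'k) vec" where
  "sharp w x = (\<lambda>i. w x (basis i))"

definition quasi_triangular :: "('n::finite,'k::field) bop \<Rightarrow> ('n,'k) bop \<Rightarrow> ('n,'k) ten2 \<Rightarrow> bool" where
  "quasi_triangular sc pc s \<longleftrightarrow> APN_YBE sc pc s \<and> invariant sc pc (tadd s (flip s))"

definition factorizable :: "('n::finite,'k::field) bop \<Rightarrow> ('n,'k) bop \<Rightarrow> ('n,'k) ten2 \<Rightarrow> bool" where
  "factorizable sc pc s \<longleftrightarrow> quasi_triangular sc pc s \<and> bij (Tmap (tadd s (flip s)))"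

definition RB_operator :: "('n,'k::field) bop \<Rightarrow> ('n,'k) bop \<Rightarrow> 'k \<Rightarrow> (('n,'k) vec \<Rightarrow> ('n,'k) vec) \<Rightarrow> bool" where
  "RB_operator sc pc lam P \<longleftrightarrow> is_linear P \<and>
    (\<forall>x y. pc (P x) (P y) = P (vadd (vadd (pc (P x) y) (pc x (P y))) (vsmul lam (pc x y)))) \<and>
    (\<forall>x y. sc (P x) (P y) = P (vadd (vadd (sc (P x) y) (sc x (P y))) (vsmul lam (sc x y))))"

definition quadratic_RB :: "('n,'k::field) bop \<Rightarrow> ('n,'k) bop \<Rightarrow> 'k \<Rightarrow> (('n,'k) vec \<Rightarrow> ('n,'k) vec)
    \<Rightarrow> (('n,'k) vec \<Rightarrow> ('n,'k) vec \<Rightarrow> 'k) \<Rightarrow> bool" where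
  "quadratic_RB sc pc lam P w \<longleftrightarrow> anti_pre_Novikov sc pc \<and> RB_operator sc pc lam P \<and>
    bilinear_form w \<and> (\<forall>x y. w x y = w y x) \<and> (\<forall>x. (\<forall>y. w x y = 0) \<longrightarrow> x = vzero) \<and>
    (\<forall>x y z. w (pc x y) z = - w x (circ sc pc z y)) \<and>
    (\<forall>x y z. w (sc x y) z = w (vadd (circ sc pc x z) (circ sc pc z x)) y) \<and>
    (\<forall>x y. w (P x) y + w x (P y) + lam * w x y = 0)"

end

theory Submission
  imports Defs "HOL-Library.Function_Algebras" "HOL.Vector_Spaces"
begin

(*
  Put r = s + tau(s) and compare A* with A through omega#.  If T_s omega# = P, the identity
  omega(Px,y) + omega(x,Py) + lambda omega(x,y) = 0 is equivalent to
  T_tau(s) omega# = -P - lambda id, i.e. to T_r omega# = -lambda id; this is the dictionary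
  between the data of (i) and of (ii).
  Through it, invariance of r becomes the two invariance identities of omega, and for invariant
  omega the APN-YBE tensor of s, paired with omega# x, omega# y, omega# z, equals omega(x, D(y,z)),
  where D is the Rota-Baxter defect of P for the product x o y.  Invariance expresses the defect for
  the product "prec" through D, and D is the sum of the defects for "succ" and "prec"; hence the
  APN-YBE holds iff P is a Rota-Baxter operator of weight lambda.
*)

section \<open>Linear algebra in coordinates\<close>

definition linear_functional :: "(('n,'k::field) vec \<Rightarrow> 'k) \<Rightarrow> bool" where
  "linear_functional g \<longleftrightarrow> (\<forall>x y. g (vadd x y) = g x + g y) \<and> (\<forall>c x. g (vsmul c x) = c * g x)"

lemma basis_apply: "basis i a = (if a = i then 1 else 0)"
  by (simp add: basis_def)

lemma mult_if_zero [simp]: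
  "x * (if P then y else 0) = (if P then x * y else 0)"
  "(if P then y else 0) * x = (if P then y * x else 0)" for x y :: "'a::semiring_0"
  by simp_all

lemma sum_if_zero [simp]: "(\<Sum>k\<in>S. if P then f k else 0) = (if P then (\<Sum>k\<in>S. f k) else 0)"
  by simp

lemma vec_eq_sum_basis: "x = (\<lambda>j. \<Sum>i\<in>UNIV. x i * basis i j)" for x :: "('n::finite,'k::field) vec"
  by (simp add: basis_apply)

lemma linear_functional_expand:
  fixes g :: "('n::finite,'k::field) vec \<Rightarrow> 'k"
  assumes g: "linear_functional g"
  shows "g x = (\<Sum>i\<in>UNIV. x i * g (basis i))"
proof -
  have "g (\<lambda>j. \<Sum>i\<in>S. x i * basis i j) = (\<Sum>i\<in>S. x i * g (basis i))" if "finite S" for S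
    using that
  proof induct
    case empty
    have "g (\<lambda>j. 0) = g (vsmul 0 (\<lambda>j. 0))" by (simp add: vsmul_def)
    then show ?case using g by (simp add: linear_functional_def)
  next
    case (insert a F)
    have "(\<lambda>j. \<Sum>i\<in>insert a F. x i * basis i j)
        = vadd (vsmul (x a) (basis a)) (\<lambda>j. \<Sum>i\<in>F. x i * basis i j)"
      using insert by (simp add: vadd_def vsmul_def)
    then show ?case using g insert by (simp add: linear_functional_def)
  qed
  from this[of UNIV] show ?thesis by (simp flip: vec_eq_sum_basis)
qed

lemma is_linearD:
  assumes "is_linear f"
  shows "f (vadd x y) = vadd (f x) (f y)" "f (vsmul c x) = vsmul c (f x)"
  using assms by (auto simp: is_linear_def)

lemma bilinear_opD:
  assumes "bilinear_op m"
  shows "m (vadd x y) z = vadd (m x z) (m y z)" "m z (vadd x y) = vadd (m z x) (m z y)"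
    "m (vsmul c x) z = vsmul c (m x z)" "m z (vsmul c x) = vsmul c (m z x)"
  using assms by (auto simp: bilinear_op_def is_linear_def)

lemma bilinear_formD:
  assumes "bilinear_form w"
  shows "w (vadd x y) z = w x z + w y z" "w (vsmul c x) z = c * w x z"
    "w z (vadd x y) = w z x + w z y" "w z (vsmul c x) = c * w z x"
  using assms by (auto simp: bilinear_form_def)

lemma bilinear_form_vzero:
  assumes "bilinear_form w"
  shows "w x vzero = 0" "w vzero x = 0"
proof -
  have "vzero = vsmul 0 vzero" by (simp add: vzero_def vsmul_def)
  then show "w x vzero = 0" "w vzero x = 0" by (metis assms bilinear_formD(2,4) mult_zero_left)+
qed

lemma vsub_eq_vzero_iff: "vsub x y = vzero \<longleftrightarrow> x = y"
  by (auto simp: vsub_def vzero_def fun_eq_iff)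

lemma vsub_eq_vadd_vsmul: "vsub x y = vadd x (vsmul (-1) y)"
  by (simp add: vsub_def vadd_def vsmul_def)

lemma vadd_vzero [simp]: "vadd x vzero = x" "vadd vzero x = x"
  by (simp_all add: vadd_def vzero_def)

lemma is_linear_comp: "is_linear f \<Longrightarrow> is_linear g \<Longrightarrow> is_linear (f \<circ> g)"
  by (simp add: is_linear_def)

lemma is_linear_inv:
  assumes f: "is_linear f" and "bij f"
  shows "is_linear (inv f)"
proof -
  have f_inv: "f (inv f y) = y" for y
    using \<open>bij f\<close> by (simp add: bij_is_surj surj_f_inv_f)
  have inv_f: "inv f (f x) = x" for x
    using \<open>bij f\<close> by (simp add: bij_is_inj)
  show ?thesis
    unfolding is_linear_def
    by (metis f_inv inv_f is_linearD[OF f])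
qed

lemma linear_functional_component: "is_linear f \<Longrightarrow> linear_functional (\<lambda>x. f x j)"
  by (simp add: linear_functional_def is_linear_def vadd_def vsmul_def)

lemma is_linear_expand:
  fixes f :: "('n::finite,'k::field) vec \<Rightarrow> ('n,'k) vec"
  assumes "is_linear f"
  shows "f x j = (\<Sum>i\<in>UNIV. x i * f (basis i) j)"
  using linear_functional_expand[OF linear_functional_component[OF assms]] .

lemma bilinear_op_expand:
  fixes m :: "('n::finite,'k::field) bop"
  assumes "bilinear_op m"
  shows "m x y j = (\<Sum>i\<in>UNIV. \<Sum>k\<in>UNIV. x i * y k * m (basis i) (basis k) j)"
proof -
  have "is_linear (\<lambda>v. m v y)" "is_linear (m v)" for v
    using assms by (simp_all add: bilinear_op_def)
  then have "m x y j = (\<Sum>i\<in>UNIV. x i * (\<Sum>k\<in>UNIV. y k * m (basis i) (basis k) j))"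
    using is_linear_expand[of "\<lambda>v. m v y" x j] is_linear_expand[of "m (basis _)" y j] by simp
  then show ?thesis by (simp add: sum_distrib_left mult.assoc)
qed

lemma bilinear_functional_vanishes:
  fixes F :: "('n::finite,'k::field) vec \<Rightarrow> ('n,'k) vec \<Rightarrow> 'k"
  assumes "\<And>e. linear_functional (\<lambda>z. F z e)" and "\<And>z. linear_functional (F z)"
    and "\<And>a b. F (basis a) (basis b) = 0"
  shows "F z e = 0"
proof -
  have "F (basis a) e = 0" for a
    using linear_functional_expand[OF assms(2)[of "basis a"], of e] assms(3) by simp
  then show ?thesis
    using linear_functional_expand[OF assms(1)[of e], of z] by simp
qed

lemma trilinear_functional_vanishes:
  fixes F :: "('n::finite,'k::field) vec \<Rightarrow> ('n,'k) vec \<Rightarrow> ('n,'k) vec \<Rightarrow> 'k"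
  assumes "\<And>e t. linear_functional (\<lambda>z. F z e t)" and "\<And>z t. linear_functional (\<lambda>e. F z e t)"
    and "\<And>z e. linear_functional (F z e)" and "\<And>a b c. F (basis a) (basis b) (basis c) = 0"
  shows "F z e t = 0"
proof -
  have "F (basis a) (basis b) t = 0" for a b
    using linear_functional_expand[OF assms(3)[of "basis a" "basis b"], of t] assms(4) by simp
  then have "F (basis a) e t = 0" for a
    using linear_functional_expand[OF assms(2)[of "basis a" t], of e] by simp
  then show ?thesis
    using linear_functional_expand[OF assms(1)[of e t], of z] by simp
qed

lemma pairing_linear [simp]:
  "pairing (vadd x y) z = pairing x z + pairing y z"
  "pairing z (vadd x y) = pairing z x + pairing z y"
  "pairing (vsmul c x) z = c * pairing x z"
  "pairing z (vsmul c x) = c * pairing z x"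
  by (simp_all add: pairing_def vadd_def vsmul_def sum.distrib sum_distrib_left algebra_simps)

lemma pairing_basis [simp]: "pairing (basis a) x = x a" "pairing x (basis a) = x a"
  by (simp_all add: pairing_def basis_apply)

lemma Tmap_vadd [simp]: "Tmap r (vadd x y) = vadd (Tmap r x) (Tmap r y)"
  by (simp add: Tmap_def vadd_def sum.distrib algebra_simps)

lemma Tmap_vsmul [simp]: "Tmap r (vsmul c x) = vsmul c (Tmap r x)"
  by (simp add: Tmap_def vsmul_def sum_distrib_left algebra_simps)

lemma is_linear_Tmap: "is_linear (Tmap r)"
  by (simp add: is_linear_def)

lemma Tmap_basis: "Tmap r (basis a) = (\<lambda>j. r a j)"
  by (simp add: Tmap_def basis_apply)

lemma Tmap_tadd: "Tmap (tadd r t) z = vadd (Tmap r z) (Tmap t z)"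
  by (simp add: Tmap_def tadd_def vadd_def sum.distrib algebra_simps)

lemma flip_tadd_flip: "flip (tadd r (flip r)) = tadd r (flip r)"
  by (simp add: flip_def tadd_def add.commute fun_eq_iff)

lemma pairing_Tmap_tadd_flip:
  "pairing e (Tmap r z) + pairing z (Tmap r e) = pairing e (Tmap (tadd r (flip r)) z)"
proof -
  have "pairing z (Tmap r e) = (\<Sum>i\<in>UNIV. \<Sum>j\<in>UNIV. z i * (r j i * e j))"
    by (simp add: pairing_def Tmap_def sum_distrib_left)
  also have "\<dots> = (\<Sum>j\<in>UNIV. \<Sum>i\<in>UNIV. e j * (r j i * z i))"
    by (subst sum.swap) (simp add: ac_simps)
  finally show ?thesis
    by (simp add: pairing_def Tmap_def tadd_def flip_def sum_distrib_left ring_distribs sum.distrib)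
qed

lemma pairing_sharp:
  assumes "bilinear_form w"
  shows "pairing (sharp w x) y = w x y"
proof -
  have "linear_functional (w x)"
    using assms by (simp add: linear_functional_def bilinear_form_def)
  from linear_functional_expand[OF this, of y] show ?thesis
    by (simp add: pairing_def sharp_def mult.commute)
qed

lemma is_linear_sharp: "bilinear_form w \<Longrightarrow> is_linear (sharp w)"
  by (simp add: is_linear_def sharp_def bilinear_formD) (simp add: vadd_def vsmul_def fun_eq_iff)

lemma inj_sharp:
  assumes w: "bilinear_form w" and nondeg: "\<And>x. \<forall>y. w x y = 0 \<Longrightarrow> x = vzero"
  shows "inj (sharp w)"
proof (rule injI)
  fix x y assume "sharp w x = sharp w y"
  then have "w (vsub x y) z = 0" for z
    using pairing_sharp[OF w, of x z] pairing_sharp[OF w, of y z]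
    by (simp add: vsub_eq_vadd_vsmul bilinear_formD[OF w])
  then show "x = y" using nondeg vsub_eq_vzero_iff by blast
qed

lemma form_Tmap_sharp_add:
  assumes "bilinear_form w" and "\<And>x y. w x y = w y x"
  shows "w (Tmap s (sharp w x)) y + w x (Tmap s (sharp w y)) =
    pairing (sharp w y) (Tmap (tadd s (flip s)) (sharp w x))"
  using pairing_Tmap_tadd_flip[of "sharp w y" s "sharp w x"]
  by (simp add: pairing_sharp[OF assms(1)] assms(2)[of "Tmap s (sharp w x)"])

lemma tmap_id_left: "is_linear g \<Longrightarrow> tmap id g r a b = g (Tmap r (basis a)) b"
  by (simp add: tmap_def Tmap_basis basis_apply is_linear_expand[of g "r a"])

lemma tmap_id_right: "is_linear f \<Longrightarrow> tmap f id r a b = f (Tmap (flip r) (basis b)) a"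
  by (simp add: tmap_def Tmap_basis basis_apply flip_def is_linear_expand[of f "\<lambda>j. r j b"])

lemma adjoint_iff_on_basis:
  fixes f g :: "('n::finite,'k::field) vec \<Rightarrow> ('n,'k) vec"
  assumes f: "is_linear f" and g: "is_linear g"
  shows "(\<forall>a b. g (basis a) b = f (basis b) a) \<longleftrightarrow> (\<forall>x y. pairing y (g x) = pairing x (f y))"
proof
  assume basis_eq: "\<forall>a b. g (basis a) b = f (basis b) a"
  have "pairing y (g x) - pairing x (f y) = 0" for x y
  proof (rule bilinear_functional_vanishes[where F = "\<lambda>x y. pairing y (g x) - pairing x (f y)"])
    show "linear_functional (\<lambda>x. pairing y (g x) - pairing x (f y))" for y
      by (simp add: linear_functional_def is_linearD[OF f] is_linearD[OF g] algebra_simps)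
    show "linear_functional (\<lambda>y. pairing y (g x) - pairing x (f y))" for x
      by (simp add: linear_functional_def is_linearD[OF f] is_linearD[OF g] algebra_simps)
    show "pairing (basis b) (g (basis a)) - pairing (basis a) (f (basis b)) = 0" for a b
      using basis_eq by simp
  qed
  then show "\<forall>x y. pairing y (g x) = pairing x (f y)"
    by simp
next
  assume adjoint: "\<forall>x y. pairing y (g x) = pairing x (f y)"
  show "\<forall>a b. g (basis a) b = f (basis b) a"
  proof (intro allI)
    fix a b
    show "g (basis a) b = f (basis b) a"
      using adjoint[rule_format, of "basis b" "basis a"] by simp
  qed
qed

lemma sum_fun_apply: "(\<Sum>v\<in>S. f v) i = (\<Sum>v\<in>S. f v i)"
  by (induct S rule: infinite_finite_induct) (auto simp: zero_fun_def plus_fun_def)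

lemma inj_basis: "inj (basis :: 'n \<Rightarrow> ('n,'k::field) vec)"
  by (rule injI) (metis basis_apply one_neq_zero)

lemma sum_range_basis:
  "(\<Sum>v\<in>range basis. (\<lambda>i. u v * v i)) = (\<lambda>j. u (basis j :: ('n::finite,'k::field) vec))"
  by (simp add: fun_eq_iff sum_fun_apply sum.reindex[OF inj_basis] basis_apply)

interpretation coord: vector_space "\<lambda>c (x::('n,'k::field) vec) i. c * x i"
  by unfold_locales (simp_all add: fun_eq_iff algebra_simps)

interpretation coord: finite_dimensional_vector_space
  "\<lambda>c (x::('n::finite,'k::field) vec) i. c * x i" "range basis"
proof unfold_locales
  show "\<not> coord.dependent (range (basis :: 'n \<Rightarrow> ('n,'k) vec))"
    by (auto simp: coord.dependent_finite sum_range_basis fun_eq_iff)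
  have "x \<in> coord.span (range (basis :: 'n \<Rightarrow> ('n,'k) vec))" for x :: "('n,'k) vec"
  proof -
    have "x = (\<Sum>v\<in>range basis. (\<lambda>i. x (inv basis v) * v i))"
      using sum_range_basis[of "\<lambda>v. x (inv basis v)"] by (simp add: inv_f_f[OF inj_basis])
    then show ?thesis
      by (simp add: coord.span_finite)
  qed
  then show "coord.span (range (basis :: 'n \<Rightarrow> ('n,'k) vec)) = UNIV"
    by auto
qed simp

lemma is_linear_inj_imp_surj:
  fixes f :: "('n::finite,'k::field) vec \<Rightarrow> ('n,'k) vec"
  assumes "is_linear f" and "inj f"
  shows "surj f"
proof -
  have "Vector_Spaces.linear (\<lambda>c x i. c * x i) (\<lambda>c x i. c * x i) f"
    using assms(1) by unfold_locales (simp_all add: is_linear_def vadd_def vsmul_def plus_fun_def)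
  then show ?thesis using assms(2) by (rule coord.linear_inj_imp_surj)
qed

section \<open>The Yang--Baxter form and invariant bilinear forms\<close>

lemma bilinear_op_circ: "bilinear_op sc \<Longrightarrow> bilinear_op pc \<Longrightarrow> bilinear_op (circ sc pc)"
  by (simp add: bilinear_op_def is_linear_def circ_def vadd_def vsmul_def algebra_simps fun_eq_iff)

lemma bilinear_op_odot: "bilinear_op sc \<Longrightarrow> bilinear_op pc \<Longrightarrow> bilinear_op (odot sc pc)"
  by (simp add: bilinear_op_def is_linear_def odot_def vadd_def vsmul_def algebra_simps fun_eq_iff)

lemma is_linear_left_mult: "bilinear_op m \<Longrightarrow> is_linear (m x)"
  by (simp add: bilinear_op_def)

lemma is_linear_Lstar: "bilinear_op sc \<Longrightarrow> bilinear_op pc \<Longrightarrow> is_linear (Lstar sc pc x)"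
  by (simp add: is_linear_def Lstar_def bilinear_opD bilinear_op_circ)
    (simp add: vadd_def vsmul_def fun_eq_iff algebra_simps)

text \<open>\<open>ybe_form sc pc s z e t\<close> is the APN-YBE expression of \<open>s\<close> paired with \<open>z \<otimes> e \<otimes> t\<close>.\<close>

definition ybe_form :: "('n::finite,'k::field) bop \<Rightarrow> ('n,'k) bop \<Rightarrow> ('n,'k) ten2
    \<Rightarrow> ('n,'k) vec \<Rightarrow> ('n,'k) vec \<Rightarrow> ('n,'k) vec \<Rightarrow> 'k" where
  "ybe_form sc pc s z e t =
     pairing z (circ sc pc (Tmap (flip s) e) (Tmap (flip s) t))
     + pairing t (odot sc pc (Tmap s e) (Tmap s z))
     + pairing e (pc (Tmap s z) (Tmap (flip s) t))"

lemma ybe_form_basis: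
  assumes "bilinear_op sc" "bilinear_op pc"
  shows "ybe_form sc pc s (basis a) (basis b) (basis c) =
    (\<Sum>i\<in>UNIV. \<Sum>j\<in>UNIV. \<Sum>k\<in>UNIV. \<Sum>l\<in>UNIV. s i j * s k l *
        (circ sc pc (basis i) (basis k) a * basis j b * basis l c
         + basis k a * basis i b * odot sc pc (basis j) (basis l) c
         + basis i a * pc (basis j) (basis k) b * basis l c))"
proof -
  note expand = bilinear_op_expand[OF bilinear_op_circ[OF assms], of "\<lambda>j. s j b" "\<lambda>j. s j c" a]
    bilinear_op_expand[OF bilinear_op_odot[OF assms], of "\<lambda>j. s b j" "\<lambda>j. s a j" c]
    bilinear_op_expand[OF assms(2), of "\<lambda>j. s a j" "\<lambda>j. s j c" b]
  have "ybe_form sc pc s (basis a) (basis b) (basis c) =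
      circ sc pc (\<lambda>j. s j b) (\<lambda>j. s j c) a + odot sc pc (\<lambda>j. s b j) (\<lambda>j. s a j) c
      + pc (\<lambda>j. s a j) (\<lambda>j. s j c) b"
    by (simp add: ybe_form_def Tmap_basis flip_def)
  then show ?thesis
    unfolding expand by (simp add: basis_apply ring_distribs sum.distrib)
qed

lemma ybe_form_linear:
  assumes "bilinear_op sc" "bilinear_op pc"
  shows "linear_functional (\<lambda>z. ybe_form sc pc s z e t)"
    "linear_functional (\<lambda>e. ybe_form sc pc s z e t)" "linear_functional (ybe_form sc pc s z e)"
  using bilinear_opD[OF assms(1)] bilinear_opD[OF assms(2)]
    bilinear_opD[OF bilinear_op_circ[OF assms]] bilinear_opD[OF bilinear_op_odot[OF assms]]
  by (simp_all add: linear_functional_def ybe_form_def algebra_simps)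

lemma APN_YBE_iff_ybe_form:
  assumes "bilinear_op sc" "bilinear_op pc"
  shows "APN_YBE sc pc s \<longleftrightarrow> (\<forall>z e t. ybe_form sc pc s z e t = 0)"
  using trilinear_functional_vanishes[OF ybe_form_linear[OF assms]]
  by (auto simp: APN_YBE_def ybe_form_basis[OF assms, symmetric])

text \<open>Abbreviations rather than definitions, so that they match the clauses of \<open>quadratic_RB\<close>
  literally.\<close>

abbreviation succ_invariant_form ::
  "('n,'k::field) bop \<Rightarrow> ('n,'k) bop \<Rightarrow> (('n,'k) vec \<Rightarrow> ('n,'k) vec \<Rightarrow> 'k) \<Rightarrow> bool" where
  "succ_invariant_form sc pc w \<equiv>
     \<forall>x y z. w (sc x y) z = w (vadd (circ sc pc x z) (circ sc pc z x)) y"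

abbreviation prec_invariant_form ::
  "('n,'k::field) bop \<Rightarrow> ('n,'k) bop \<Rightarrow> (('n,'k) vec \<Rightarrow> ('n,'k) vec \<Rightarrow> 'k) \<Rightarrow> bool" where
  "prec_invariant_form sc pc w \<equiv> \<forall>x y z. w (pc x y) z = - w x (circ sc pc z y)"

lemma succ_invariant_form_iff:
  assumes "\<And>x y. w x y = w y x"
  shows "succ_invariant_form sc pc w \<longleftrightarrow> (\<forall>x u v. w v (Lstar sc pc x u) = w u (sc x v))"
  using assms by (auto simp: Lstar_def)

lemma prec_invariant_form_iff:
  assumes sc: "bilinear_op sc" and pc: "bilinear_op pc" and w: "bilinear_form w"
    and w_sym: "\<And>x y. w x y = w y x" and succ: "succ_invariant_form sc pc w"
  shows "prec_invariant_form sc pc w \<longleftrightarrow> (\<forall>x u v. w v (odot sc pc x u) = w u (circ sc pc x v))"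
proof -
  have odot_expand:
    "w v (odot sc pc x u) = w (circ sc pc x v) u + (w (circ sc pc v x) u + w (pc u x) v)"
    for x u v
    using succ by (simp add: odot_def bilinear_formD[OF w] w_sym[of v] add.assoc)
  have pointwise:
    "w v (odot sc pc x u) = w u (circ sc pc x v) \<longleftrightarrow> w (pc u x) v = - w u (circ sc pc v x)"
    for x u v
    by (simp add: odot_expand w_sym[of u] eq_neg_iff_add_eq_0 add.commute)
  show ?thesis
  proof
    assume prec: "prec_invariant_form sc pc w"
    show "\<forall>x u v. w v (odot sc pc x u) = w u (circ sc pc x v)"
      by (intro allI, subst pointwise) (rule prec[rule_format])
  next
    assume odot: "\<forall>x u v. w v (odot sc pc x u) = w u (circ sc pc x v)"
    show "prec_invariant_form sc pc w"
    proof (intro allI)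
      fix x y z
      show "w (pc x y) z = - w x (circ sc pc z y)"
        using odot pointwise[where x = y and u = x and v = z] by simp
    qed
  qed
qed

definition rb_defect :: "(('n,'k::field) vec \<Rightarrow> ('n,'k) vec) \<Rightarrow> 'k \<Rightarrow> ('n,'k) bop \<Rightarrow> ('n,'k) bop" where
  "rb_defect P lam m x y =
     vsub (m (P x) (P y)) (P (vadd (vadd (m (P x) y) (m x (P y))) (vsmul lam (m x y))))"

lemma RB_operator_iff_rb_defect:
  "RB_operator sc pc lam P \<longleftrightarrow>
     is_linear P \<and> (\<forall>x y. rb_defect P lam pc x y = vzero) \<and> (\<forall>x y. rb_defect P lam sc x y = vzero)"
  by (simp add: RB_operator_def rb_defect_def vsub_eq_vzero_iff)

lemma rb_defect_circ:
  assumes "bilinear_op sc" "bilinear_op pc" "is_linear P"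
  shows "rb_defect P lam (circ sc pc) x y = vadd (rb_defect P lam sc x y) (rb_defect P lam pc x y)"
  using assms
  by (simp add: rb_defect_def circ_def bilinear_opD is_linearD vsub_eq_vadd_vsmul)
    (simp add: vadd_def vsmul_def fun_eq_iff algebra_simps)

section \<open>Tensors versus Rota--Baxter data\<close>

locale form_tensor =
  fixes w :: "('n::finite,'k::field) vec \<Rightarrow> ('n,'k) vec \<Rightarrow> 'k"
    and P :: "('n,'k) vec \<Rightarrow> ('n,'k) vec" and s :: "('n,'k) ten2" and lam :: 'k
  assumes bilinear_w: "bilinear_form w"
    and w_sym: "w x y = w y x"
    and w_nondegenerate: "\<forall>y. w x y = 0 \<Longrightarrow> x = vzero"
    and Tmap_sharp: "Tmap s (sharp w x) = P x"
    and compatible: "w (P x) y + w x (P y) + lam * w x y = 0"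
    and lam_nonzero: "lam \<noteq> 0"
begin

lemma P_eq: "P = Tmap s \<circ> sharp w"
  by (simp add: fun_eq_iff Tmap_sharp)

lemma is_linear_P: "is_linear P"
  unfolding P_eq by (rule is_linear_comp[OF is_linear_Tmap is_linear_sharp[OF bilinear_w]])

lemma bij_sharp: "bij (sharp w)"
  using inj_sharp[OF bilinear_w w_nondegenerate]
    is_linear_inj_imp_surj[OF is_linear_sharp[OF bilinear_w]]
  by (simp add: bij_def)

lemma sharp_inv_sharp: "sharp w (inv (sharp w) z) = z"
  using bij_sharp by (simp add: bij_is_surj surj_f_inv_f)

lemma compatible_left: "w (P x) y = - w x (P y) - lam * w x y"
  using compatible[of x y] by (simp add: algebra_simps eq_neg_iff_add_eq_0)

definition Pbar :: "('n,'k) vec \<Rightarrow> ('n,'k) vec" where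
  "Pbar x = vadd (vsmul (-1) (P x)) (vsmul (-lam) x)"

lemma Tmap_tadd_flip_sharp: "Tmap (tadd s (flip s)) (sharp w x) = vsmul (-lam) x"
proof
  fix j
  define u where "u = inv (sharp w) (basis j)"
  have u: "sharp w u = basis j"
    by (simp add: u_def sharp_inv_sharp)
  have "Tmap (tadd s (flip s)) (sharp w x) j = w (P x) u + w x (P u)"
    using form_Tmap_sharp_add[OF bilinear_w w_sym, of s x u] unfolding Tmap_sharp by (simp add: u)
  also have "\<dots> = - lam * w u x"
    using compatible[of x u] by (simp add: w_sym[of x] eq_neg_iff_add_eq_0)
  also have "\<dots> = vsmul (-lam) x j"
    using pairing_sharp[OF bilinear_w, of u x] by (simp add: u vsmul_def)
  finally show "Tmap (tadd s (flip s)) (sharp w x) j = vsmul (-lam) x j" .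
qed

lemma Tmap_flip_sharp: "Tmap (flip s) (sharp w x) = Pbar x"
proof
  fix j
  have "P x j + Tmap (flip s) (sharp w x) j = - lam * x j"
    using fun_cong[OF Tmap_tadd_flip_sharp[of x], of j]
    by (simp add: Tmap_tadd Tmap_sharp vadd_def vsmul_def)
  then show "Tmap (flip s) (sharp w x) j = Pbar x j"
    unfolding Pbar_def vadd_def vsmul_def by algebra
qed

lemma bij_Tmap_tadd_flip: "bij (Tmap (tadd s (flip s)))"
proof -
  have "Tmap (tadd s (flip s)) z = vsmul (-lam) (inv (sharp w) z)" for z
    using Tmap_tadd_flip_sharp[of "inv (sharp w) z"] by (simp add: sharp_inv_sharp)
  then have Tr_eq: "Tmap (tadd s (flip s)) = vsmul (-lam) \<circ> inv (sharp w)"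
    by (simp add: fun_eq_iff)
  have "bij (vsmul (-lam) :: ('n,'k) vec \<Rightarrow> ('n,'k) vec)"
    by (rule o_bij[where g = "vsmul (- inverse lam)"])
      (simp_all add: fun_eq_iff vsmul_def lam_nonzero)
  with bij_imp_bij_inv[OF bij_sharp] show ?thesis
    unfolding Tr_eq by (rule bij_comp)
qed

lemma tmap_tadd_flip_eq_iff:
  assumes f: "is_linear f" and g: "is_linear g"
  shows "tmap id g (tadd s (flip s)) = tmap f id (tadd s (flip s)) \<longleftrightarrow> (\<forall>u v. w v (g u) = w u (f v))"
proof -
  let ?Tr = "Tmap (tadd s (flip s))"
  have "tmap id g (tadd s (flip s)) = tmap f id (tadd s (flip s)) \<longleftrightarrow>
      (\<forall>a b. (g \<circ> ?Tr) (basis a) b = (f \<circ> ?Tr) (basis b) a)"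
    by (simp add: fun_eq_iff tmap_id_left[OF g] tmap_id_right[OF f] flip_tadd_flip)
  also have "\<dots> \<longleftrightarrow> (\<forall>z e. pairing e (g (?Tr z)) = pairing z (f (?Tr e)))"
    using adjoint_iff_on_basis[OF is_linear_comp[OF f is_linear_Tmap]
        is_linear_comp[OF g is_linear_Tmap]]
    by simp
  also have "\<dots> \<longleftrightarrow>
      (\<forall>u v. pairing (sharp w v) (g (?Tr (sharp w u))) = pairing (sharp w u) (f (?Tr (sharp w v))))"
    by (metis sharp_inv_sharp)
  also have "\<dots> \<longleftrightarrow> (\<forall>u v. w v (g u) = w u (f v))"
    by (simp add: Tmap_tadd_flip_sharp is_linearD[OF f] is_linearD[OF g]
        pairing_sharp[OF bilinear_w] lam_nonzero)
  finally show ?thesis .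
qed

end

locale apn_form_tensor = form_tensor w P s lam
  for w :: "('n::finite,'k::field) vec \<Rightarrow> ('n,'k) vec \<Rightarrow> 'k" and P s lam +
  fixes sc pc :: "('n,'k) bop"
  assumes bilinear_sc: "bilinear_op sc" and bilinear_pc: "bilinear_op pc"
begin

lemmas bilinear_rules = bilinear_opD[OF bilinear_sc] bilinear_opD[OF bilinear_pc]
  bilinear_opD[OF bilinear_op_circ[OF bilinear_sc bilinear_pc]]
  bilinear_opD[OF bilinear_op_odot[OF bilinear_sc bilinear_pc]]
  bilinear_formD[OF bilinear_w] is_linearD[OF is_linear_P] vsub_eq_vadd_vsmul

lemma invariant_iff_invariant_form:
  "invariant sc pc (tadd s (flip s)) \<longleftrightarrow> succ_invariant_form sc pc w \<and> prec_invariant_form sc pc w"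
proof -
  have "invariant sc pc (tadd s (flip s)) \<longleftrightarrow>
      (\<forall>x u v. w v (Lstar sc pc x u) = w u (sc x v)) \<and>
      (\<forall>x u v. w v (odot sc pc x u) = w u (circ sc pc x v))"
    unfolding invariant_def
    using tmap_tadd_flip_eq_iff[OF is_linear_left_mult[OF bilinear_sc]
        is_linear_Lstar[OF bilinear_sc bilinear_pc]]
      tmap_tadd_flip_eq_iff[OF is_linear_left_mult[OF bilinear_op_circ[OF bilinear_sc bilinear_pc]]
        is_linear_left_mult[OF bilinear_op_odot[OF bilinear_sc bilinear_pc]]]
    by (auto simp: eq_commute[of "tmap (circ sc pc _) id _"])
  then show ?thesis
    using succ_invariant_form_iff[where w = w and sc = sc and pc = pc, OF w_sym]
      prec_invariant_form_iff[OF bilinear_sc bilinear_pc bilinear_w w_sym]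
    by blast
qed

lemma ybe_form_sharp:
  assumes succ: "succ_invariant_form sc pc w" and prec: "prec_invariant_form sc pc w"
  shows "ybe_form sc pc s (sharp w x) (sharp w y) (sharp w z) =
    w x (rb_defect P lam (circ sc pc) y z)"
proof -
  have "w z (odot sc pc (P y) (P x)) = w (sc (P y) (P x)) z + w (pc (P x) (P y)) z"
    by (simp add: odot_def bilinear_rules w_sym[of z])
  also have "\<dots> = w (circ sc pc (P y) z) (P x)"
    using succ prec by (simp add: bilinear_rules w_sym[of "circ sc pc z (P y)"])
  finally have odot_term: "w z (odot sc pc (P y) (P x)) = w (P x) (circ sc pc (P y) z)"
    by (simp add: w_sym[of _ "P x"])
  have pc_term: "w y (pc (P x) (Pbar z)) = - w (P x) (circ sc pc y (Pbar z))"
    using prec w_sym[of y] by simp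
  have "ybe_form sc pc s (sharp w x) (sharp w y) (sharp w z) =
      w x (circ sc pc (Pbar y) (Pbar z)) + w z (odot sc pc (P y) (P x)) + w y (pc (P x) (Pbar z))"
    by (simp add: ybe_form_def Tmap_sharp Tmap_flip_sharp pairing_sharp[OF bilinear_w])
  then show ?thesis
    unfolding odot_term pc_term
    by (simp add: rb_defect_def Pbar_def bilinear_rules compatible_left algebra_simps)
qed

lemma rb_defect_pc_form:
  assumes prec: "prec_invariant_form sc pc w"
  shows "w (rb_defect P lam pc x y) z = - w x (rb_defect P lam (circ sc pc) z y)"
  using prec by (simp add: rb_defect_def bilinear_rules compatible_left algebra_simps)

lemma APN_YBE_iff_RB_operator:
  assumes succ: "succ_invariant_form sc pc w" and prec: "prec_invariant_form sc pc w"
  shows "APN_YBE sc pc s \<longleftrightarrow> RB_operator sc pc lam P"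
proof -
  have circ_sc_pc: "rb_defect P lam (circ sc pc) x y =
      vadd (rb_defect P lam sc x y) (rb_defect P lam pc x y)" for x y
    by (rule rb_defect_circ[OF bilinear_sc bilinear_pc is_linear_P])
  have "APN_YBE sc pc s \<longleftrightarrow> (\<forall>x y z. ybe_form sc pc s (sharp w x) (sharp w y) (sharp w z) = 0)"
    unfolding APN_YBE_iff_ybe_form[OF bilinear_sc bilinear_pc] by (metis sharp_inv_sharp)
  also have "\<dots> \<longleftrightarrow> (\<forall>x y. rb_defect P lam (circ sc pc) x y = vzero)"
    using w_nondegenerate bilinear_form_vzero[OF bilinear_w]
    by (auto simp: ybe_form_sharp[OF succ prec] w_sym[of _ "rb_defect _ _ _ _ _"])
  also have "\<dots> \<longleftrightarrow> (\<forall>x y. rb_defect P lam pc x y = vzero) \<and> (\<forall>x y. rb_defect P lam sc x y = vzero)"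
  proof
    assume circ0: "\<forall>x y. rb_defect P lam (circ sc pc) x y = vzero"
    then have pc0: "rb_defect P lam pc x y = vzero" for x y
      using w_nondegenerate bilinear_form_vzero[OF bilinear_w]
      by (simp add: rb_defect_pc_form[OF prec])
    with circ0
    show "(\<forall>x y. rb_defect P lam pc x y = vzero) \<and> (\<forall>x y. rb_defect P lam sc x y = vzero)"
      by (simp add: circ_sc_pc)
  qed (simp add: circ_sc_pc)
  finally show ?thesis
    by (simp add: RB_operator_iff_rb_defect is_linear_P)
qed

lemma quasi_triangular_iff:
  "quasi_triangular sc pc s \<longleftrightarrow>
     RB_operator sc pc lam P \<and> succ_invariant_form sc pc w \<and> prec_invariant_form sc pc w"
  using invariant_iff_invariant_form APN_YBE_iff_RB_operator
  by (auto simp: quasi_triangular_def)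

end

lemma form_tensor_of_bij:
  fixes s :: "('n::finite,'k::field) ten2"
  assumes bij: "bij (Tmap (tadd s (flip s)))" and lam: "lam \<noteq> 0"
  defines "w \<equiv> \<lambda>x y. - lam * pairing (inv (Tmap (tadd s (flip s))) x) y"
  shows "form_tensor w (Tmap s \<circ> sharp w) s lam"
proof -
  let ?Tr = "Tmap (tadd s (flip s))"
  have Tr_inv: "?Tr (inv ?Tr x) = x" for x
    using bij by (simp add: bij_is_surj surj_f_inv_f)
  have w_apply: "w x y = - lam * pairing (inv ?Tr x) y" for x y
    by (simp add: w_def)
  have bilinear: "bilinear_form w"
    by (simp add: bilinear_form_def w_apply is_linearD[OF is_linear_inv[OF is_linear_Tmap bij]]
        algebra_simps)
  have sym: "w x y = w y x" for x y
  proof -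
    have "pairing (inv ?Tr x) (?Tr (inv ?Tr y)) = pairing (inv ?Tr y) (?Tr (inv ?Tr x))"
      using pairing_Tmap_tadd_flip[of "inv ?Tr x" s "inv ?Tr y"]
        pairing_Tmap_tadd_flip[of "inv ?Tr y" s "inv ?Tr x"]
      by (simp add: add.commute)
    then show ?thesis by (simp add: w_apply Tr_inv)
  qed
  have nondeg: "x = vzero" if "\<forall>y. w x y = 0" for x
  proof -
    have "inv ?Tr x j = 0" for j
      using that[rule_format, of "basis j"] lam by (simp add: w_apply)
    then have "inv ?Tr x = vzero"
      by (simp add: vzero_def fun_eq_iff)
    then show ?thesis
      using Tr_inv[of x] by (simp add: Tmap_def vzero_def)
  qed
  have sharp_w: "sharp w x = vsmul (-lam) (inv ?Tr x)" for x
    by (simp add: sharp_def w_apply vsmul_def fun_eq_iff)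
  have compatible: "w (Tmap s (sharp w x)) y + w x (Tmap s (sharp w y)) + lam * w x y = 0" for x y
  proof -
    have "w (Tmap s (sharp w x)) y + w x (Tmap s (sharp w y)) =
        pairing (sharp w y) (?Tr (sharp w x))"
      by (rule form_Tmap_sharp_add[OF bilinear sym])
    also have "\<dots> = - lam * w y x"
      by (simp add: sharp_w Tr_inv pairing_sharp[OF bilinear] bilinear_formD[OF bilinear] w_apply)
    finally show ?thesis
      by (simp add: sym[of y])
  qed
  show ?thesis
    by unfold_locales (use bilinear sym nondeg compatible lam in auto)
qed

lemma form_tensor_of_nondegenerate:
  assumes bilinear: "bilinear_form w" and sym: "\<And>x y. w x y = w y x"
    and nondeg: "\<And>x. \<forall>y. w x y = 0 \<Longrightarrow> x = vzero"
    and compatible: "\<And>x y. w (P x) y + w x (P y) + lam * w x y = 0" and lam: "lam \<noteq> 0"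
    and s: "Tmap s = P \<circ> inv (sharp w)"
  shows "form_tensor w P s lam"
proof
  show "Tmap s (sharp w x) = P x" for x
    using inj_sharp[OF bilinear nondeg] by (simp add: s)
qed (use assms in auto)

theorem mainTheorem17:
  fixes sc pc :: "('n::finite, 'k::field) bop"
  shows
   "(\<forall>(s :: ('n,'k) ten2) (lam :: 'k).
       anti_pre_Novikov sc pc \<and> factorizable sc pc s \<and> lam \<noteq> 0 \<longrightarrow>
       (let w = (\<lambda>x y. - lam * pairing (inv (Tmap (tadd s (flip s))) x) y)
        in quadratic_RB sc pc lam (Tmap s \<circ> sharp w) w))
  \<and> (\<forall>(P :: ('n,'k) vec \<Rightarrow> ('n,'k) vec) w (lam :: 'k) (s :: ('n,'k) ten2).
       quadratic_RB sc pc lam P w \<and> lam \<noteq> 0 \<and> Tmap s = P \<circ> inv (sharp w) \<longrightarrow>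
       factorizable sc pc s)"
proof (intro conjI allI impI)
  fix s :: "('n,'k) ten2" and lam :: 'k
  assume H: "anti_pre_Novikov sc pc \<and> factorizable sc pc s \<and> lam \<noteq> 0"
  define w where "w = (\<lambda>x y. - lam * pairing (inv (Tmap (tadd s (flip s))) x) y)"
  from H have apn: "anti_pre_Novikov sc pc" and qt: "quasi_triangular sc pc s"
    and bij: "bij (Tmap (tadd s (flip s)))" and lam: "lam \<noteq> 0"
    by (simp_all add: factorizable_def)
  have "form_tensor w (Tmap s \<circ> sharp w) s lam"
    unfolding w_def by (rule form_tensor_of_bij[OF bij lam])
  then interpret apn_form_tensor w "Tmap s \<circ> sharp w" s lam sc pc
    by (rule apn_form_tensor.intro)
      (use apn in \<open>simp add: apn_form_tensor_axioms_def anti_pre_Novikov_def\<close>)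
  have "quadratic_RB sc pc lam (Tmap s \<circ> sharp w) w"
    using apn qt bilinear_w w_sym w_nondegenerate compatible
    unfolding quadratic_RB_def quasi_triangular_iff by blast
  then show "let w = (\<lambda>x y. - lam * pairing (inv (Tmap (tadd s (flip s))) x) y)
      in quadratic_RB sc pc lam (Tmap s \<circ> sharp w) w"
    by (simp add: w_def)
next
  fix P w and lam :: 'k and s :: "('n,'k) ten2"
  assume H: "quadratic_RB sc pc lam P w \<and> lam \<noteq> 0 \<and> Tmap s = P \<circ> inv (sharp w)"
  then have "form_tensor w P s lam"
    by (intro form_tensor_of_nondegenerate) (auto simp: quadratic_RB_def)
  then interpret apn_form_tensor w P s lam sc pc
    by (rule apn_form_tensor.intro)
      (use H in \<open>simp add: apn_form_tensor_axioms_def quadratic_RB_def anti_pre_Novikov_def\<close>)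
  show "factorizable sc pc s"
    using H bij_Tmap_tadd_flip unfolding factorizable_def quasi_triangular_iff quadratic_RB_def
    by blast
qed

end
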